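(* Let $A \in \mathbb{R}^{n\times p}$. Let $f:\mathbb{R}^n\to\mathbb{R}$ be convex, finite everywhere and Lipschitz-continuous, and let $C$ be the domain of its Fenchel conjugate $f^\ast$. Let $h:\mathbb{R}^p\to\mathbb{R}\cup\{+\infty\}$ be lower-semicontinuous, $\mu$-strongly convex and essentially smooth. Let $(\rho_t)_{t\geq1}$ be step sizes in $[0,1]$ and $y_0\in C$. Consider: (i) the generalized conditional gradient recursion: for $t\geq1$, $$x_{t-1} = \arg\min_{x\in\mathbb{R}^p} h(x) + x^\top A^\top y_{t-1} = (h^\ast)'(-A^\top y_{t-1}),\quad \bar y_{t-1}\in\arg\max_{y\in C} y^\top A x_{t-1} - f^\ast(y),\quad y_t = (1-\rho_t)y_{t-1} + \rho_t \bar y_{t-1};$$ (ii) the mirror descent recursion started from $x_0 = (h^\ast)'(-A^\top y_0)$: for $t\geq 1$, $$\bar y_{t-1} \in \arg\max_{y\in C}\ y^\top A x_{t-1} - f^\ast(y),\qquad x_t = \arg\min_{x\in\mathbb{R}^p}\ h(x) - (1-\rho_t)\, x^\top h'(x_{t-1}) + \rho_t\, x^\top A^\top \bar y_{t-1}.$$ Then these two recursions are equivalent: (with the same choices of maximizers $\bar y_{t-1}$) they generate the same sequence $(x_t)$, and $h'(x_t) = -A^\top y_t$ for all $t\geq0$.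
   Context: $h$ is essentially smooth if it is differentiable on the interior of its domain $K$ (assumed nonempty) and $\|h'(x)\|\to+\infty$ as $x$ approaches the boundary of $K$; then $h'$ is a bijection from ${\rm int}(K)$ onto $\mathbb{R}^p$, and $(h^\ast)'$ is its inverse. The Fenchel conjugate is $f^\ast(y)=\sup_z y^\top z - f(z)$; $h^\ast$ is differentiable and $(h^\ast)'(z)$ is the unique maximizer of $x^\top z - h(x)$. *)

theory Defs
  imports "HOL-Analysis.Analysis"
begin

definition fconj :: "('a::real_inner \<Rightarrow> ereal) \<Rightarrow> 'a \<Rightarrow> ereal" where
  "fconj f y = (SUP z. ereal (y \<bullet> z) - f z)"

definition edom :: "('a \<Rightarrow> ereal) \<Rightarrow> 'a set" where
  "edom f = {x. f x < \<infinity>}"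

definition lsc :: "('a::topological_space \<Rightarrow> ereal) \<Rightarrow> bool" where
  "lsc h \<longleftrightarrow> (\<forall>x. h x \<le> Liminf (at x) h)"

definition strongly_convex_ereal :: "real \<Rightarrow> ('a::real_normed_vector \<Rightarrow> ereal) \<Rightarrow> bool" where
  "strongly_convex_ereal \<mu> h \<longleftrightarrow> \<mu> > 0 \<and>
     (\<forall>x y. \<forall>l\<in>{0..1}. h (l *\<^sub>R x + (1 - l) *\<^sub>R y)
        \<le> ereal l * h x + ereal (1 - l) * h y - ereal (\<mu> / 2 * l * (1 - l) * (norm (x - y))\<^sup>2))"

definition essentially_smooth :: "('a::real_inner \<Rightarrow> ereal) \<Rightarrow> ('a \<Rightarrow> 'a) \<Rightarrow> bool" where
  "essentially_smooth h dh \<longleftrightarrow>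
     interior (edom h) \<noteq> {} \<and>
     (\<forall>x\<in>interior (edom h). GDERIV (\<lambda>z. real_of_ereal (h z)) x :> dh x) \<and>
     (\<forall>b\<in>frontier (edom h). filterlim (\<lambda>x. norm (dh x)) at_top (at b within interior (edom h)))"

end

theory Submission
  imports Defs
begin

(* Both recursions are governed by the identity x_t = grad h^* (-A^T y_t), i.e. x_t minimizes the tilted
   function h + <., A^T y_t>.  For a lower-semicontinuous, strongly convex h such a minimizer exists (a
   minimizing sequence is Cauchy by strong convexity) and it is the gradient of h^* at -A^T y_t, because
   h^* is squeezed between an affine function and that function plus a quadratic.  Essential smoothness
   forces the minimizer into the interior of dom h, since the gradient stays bounded on segments towards
   it; there it is characterised by h'(x_t) = -A^T y_t.  Substituting this into the mirror step turns its
   objective into h + <., (1 - rho_t) A^T y_(t-1) + rho_t A^T ybar_(t-1)> = h + <., A^T y_t>, so by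
   induction on t the two recursions produce the same iterates. *)

definition minimizes_tilted :: "('a::real_inner \<Rightarrow> ereal) \<Rightarrow> 'a \<Rightarrow> 'a \<Rightarrow> bool" where
  "minimizes_tilted h v x \<longleftrightarrow> (\<forall>z. h x + ereal (x \<bullet> v) \<le> h z + ereal (z \<bullet> v))"

lemma inner_minus_quadratic_le:
  fixes d u :: "'a::real_inner"
  assumes "\<mu> > 0"
  shows "d \<bullet> u - \<mu> / 2 * (norm u)\<^sup>2 \<le> (norm d)\<^sup>2 / (2 * \<mu>)"
proof -
  have "0 \<le> (norm (d - \<mu> *\<^sub>R u))\<^sup>2" by simp
  also have "\<dots> = (norm d)\<^sup>2 - 2 * \<mu> * (d \<bullet> u) + \<mu>\<^sup>2 * (norm u)\<^sup>2"
    unfolding power2_norm_eq_inner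
    by (simp add: inner_diff_left inner_diff_right inner_commute power2_eq_square)
  finally show ?thesis using assms by (simp add: field_simps power2_eq_square)
qed

lemma gderiv_quadratic_sandwich:
  fixes F :: "'a::real_inner \<Rightarrow> real"
  assumes "\<And>u. \<bar>F u - F u0 - (u - u0) \<bullet> m\<bar> \<le> c * (norm (u - u0))\<^sup>2"
  shows "GDERIV F u0 :> m"
  unfolding gderiv_def has_derivative_at_alt
proof (intro conjI allI impI bounded_linear_inner_left)
  fix e :: real assume "e > 0"
  show "\<exists>d>0. \<forall>u. norm (u - u0) < d \<longrightarrow> norm (F u - F u0 - (u - u0) \<bullet> m) \<le> e * norm (u - u0)"
  proof (intro exI[of _ "e / (\<bar>c\<bar> + 1)"] conjI allI impI)
    show "0 < e / (\<bar>c\<bar> + 1)" using \<open>e > 0\<close> by simp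
    fix u assume u: "norm (u - u0) < e / (\<bar>c\<bar> + 1)"
    have "c * (norm (u - u0))\<^sup>2 \<le> \<bar>c\<bar> * (norm (u - u0))\<^sup>2"
      by (intro mult_right_mono) auto
    also have "\<dots> = (\<bar>c\<bar> * norm (u - u0)) * norm (u - u0)"
      by (simp add: power2_eq_square)
    also have "\<dots> \<le> e * norm (u - u0)"
    proof (intro mult_right_mono)
      have "\<bar>c\<bar> * norm (u - u0) \<le> (\<bar>c\<bar> + 1) * norm (u - u0)" by (simp add: distrib_right)
      also have "\<dots> < e" using u by (simp add: field_simps)
      finally show "\<bar>c\<bar> * norm (u - u0) \<le> e" by simp
    qed simp
    finally show "norm (F u - F u0 - (u - u0) \<bullet> m) \<le> e * norm (u - u0)"
      using assms[of u] by simp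
  qed
qed

lemma gderiv_unique:
  assumes "GDERIV f x :> D" and "GDERIV f x :> E"
  shows "D = E"
proof -
  have "(\<lambda>d. d \<bullet> D) = (\<lambda>d. d \<bullet> E)"
    using has_derivative_unique assms unfolding gderiv_def by blast
  then have "(D - E) \<bullet> D = (D - E) \<bullet> E" by metis
  then have "(D - E) \<bullet> (D - E) = 0" by (simp add: inner_diff_right)
  then show ?thesis by simp
qed

lemma lsc_le_tendsto:
  fixes h :: "'a::topological_space \<Rightarrow> ereal"
  assumes "lsc h" and X: "(X \<longlongrightarrow> x) F" and hX: "((\<lambda>n. h (X n)) \<longlongrightarrow> l) F" and "F \<noteq> bot"
  shows "h x \<le> l"
proof (rule ccontr)
  assume "\<not> h x \<le> l"
  then have "l < h x" by simp
  then obtain c where "l < c" "c < h x" using dense by blast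
  have "h x \<le> Liminf (at x) h" using \<open>lsc h\<close> by (simp add: lsc_def)
  with \<open>c < h x\<close> have "eventually (\<lambda>z. c < h z) (at x)" by (simp add: le_Liminf_iff)
  then have "eventually (\<lambda>z. c < h z) (nhds x)"
    unfolding eventually_at_filter by (rule eventually_mono) (use \<open>c < h x\<close> in auto)
  then have "eventually (\<lambda>n. c < h (X n)) F"
    using filterlim_iff[THEN iffD1, OF X] by blast
  moreover have "eventually (\<lambda>n. h (X n) < c) F"
    using order_tendstoD(2)[OF hX \<open>l < c\<close>] .
  ultimately have "eventually (\<lambda>n. False) F" by eventually_elim auto
  with \<open>F \<noteq> bot\<close> show False by simp
qed

lemma Cauchy_of_midpoint_gap:
  fixes zs :: "nat \<Rightarrow> 'a::real_normed_vector"
  assumes "c > 0" and lim: "\<phi> \<longlonglongrightarrow> m"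
    and gap: "\<And>i j. c * (norm (zs i - zs j))\<^sup>2 \<le> (\<phi> i + \<phi> j) / 2 - m"
  shows "Cauchy zs"
proof (rule metric_CauchyI)
  fix e :: real assume "e > 0"
  have "eventually (\<lambda>n. \<phi> n < m + c * e\<^sup>2) sequentially"
    using order_tendstoD(2)[OF lim] \<open>c > 0\<close> \<open>e > 0\<close> by simp
  then obtain N where N: "\<And>n. n \<ge> N \<Longrightarrow> \<phi> n < m + c * e\<^sup>2"
    unfolding eventually_sequentially by blast
  have "dist (zs i) (zs j) < e" if "i \<ge> N" "j \<ge> N" for i j
  proof -
    have "c * (norm (zs i - zs j))\<^sup>2 < c * e\<^sup>2"
      using gap[of i j] N[OF \<open>i \<ge> N\<close>] N[OF \<open>j \<ge> N\<close>] by (simp add: field_simps)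
    then have "(norm (zs i - zs j))\<^sup>2 < e\<^sup>2" using \<open>c > 0\<close> by simp
    then show ?thesis using \<open>e > 0\<close> by (simp add: dist_norm power_less_imp_less_base)
  qed
  then show "\<exists>N. \<forall>i\<ge>N. \<forall>j\<ge>N. dist (zs i) (zs j) < e" by blast
qed

lemma all_nat_iff_base_and_step:
  assumes "\<And>t. P t \<Longrightarrow> Q t \<longleftrightarrow> P (Suc t)"
  shows "(\<forall>t. P t) \<longleftrightarrow> P 0 \<and> (\<forall>t. Q t)"
proof safe
  fix t assume "P 0" "\<forall>t. Q t"
  then show "P t" by (induction t) (use assms in blast)+
qed (use assms in blast)+

lemma strongly_convex_erealD:
  fixes h :: "'a::real_normed_vector \<Rightarrow> ereal"
  assumes sc: "strongly_convex_ereal \<mu> h" and proper: "\<forall>z. h z \<noteq> -\<infinity>"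
    and hx: "h x < \<infinity>" and hy: "h y < \<infinity>" and l: "0 \<le> l" "l \<le> 1"
  shows "h (l *\<^sub>R x + (1 - l) *\<^sub>R y) < \<infinity>"
    and "real_of_ereal (h (l *\<^sub>R x + (1 - l) *\<^sub>R y))
           \<le> l * real_of_ereal (h x) + (1 - l) * real_of_ereal (h y) - \<mu> / 2 * l * (1 - l) * (norm (x - y))\<^sup>2"
proof -
  let ?p = "l *\<^sub>R x + (1 - l) *\<^sub>R y"
  obtain a b where a: "h x = ereal a" and b: "h y = ereal b"
    using hx hy proper by (cases "h x"; cases "h y") auto
  have "h ?p \<le> ereal l * h x + ereal (1 - l) * h y - ereal (\<mu> / 2 * l * (1 - l) * (norm (x - y))\<^sup>2)"
    using sc l unfolding strongly_convex_ereal_def by auto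
  then have le: "h ?p \<le> ereal (l * a + (1 - l) * b - \<mu> / 2 * l * (1 - l) * (norm (x - y))\<^sup>2)"
    by (simp add: a b)
  then obtain c where "h ?p = ereal c"
    using proper by (cases "h ?p") auto
  with le show "h ?p < \<infinity>" "real_of_ereal (h ?p) \<le> l * real_of_ereal (h x) + (1 - l) * real_of_ereal (h y)
                    - \<mu> / 2 * l * (1 - l) * (norm (x - y))\<^sup>2"
    by (simp_all add: a b)
qed

lemma convex_edom:
  fixes h :: "'a::real_normed_vector \<Rightarrow> ereal"
  assumes "strongly_convex_ereal \<mu> h" "\<forall>z. h z \<noteq> -\<infinity>"
  shows "convex (edom h)"
  unfolding convex_def edom_def
proof (intro ballI allI impI)
  fix x y and u v :: real
  assume "x \<in> {x. h x < \<infinity>}" "y \<in> {x. h x < \<infinity>}" "0 \<le> u" "0 \<le> v" "u + v = 1"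
  moreover from this have "v = 1 - u" "u \<le> 1" by auto
  ultimately show "u *\<^sub>R x + v *\<^sub>R y \<in> {x. h x < \<infinity>}"
    using strongly_convex_erealD(1)[OF assms, of x y u] by simp
qed

lemma strongly_convex_gradient_inequality:
  fixes h :: "'a::real_inner \<Rightarrow> ereal"
  assumes sc: "strongly_convex_ereal \<mu> h" and proper: "\<forall>z. h z \<noteq> -\<infinity>"
    and hz: "h z < \<infinity>" and hy: "h y < \<infinity>"
    and grad: "GDERIV (\<lambda>u. real_of_ereal (h u)) z :> G"
  shows "real_of_ereal (h z) + G \<bullet> (y - z) + \<mu> / 2 * (norm (y - z))\<^sup>2 \<le> real_of_ereal (h y)"
proof -
  define H where "H = (\<lambda>u. real_of_ereal (h u))"
  define c where "c = \<mu> / 2 * (norm (y - z))\<^sup>2"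
  define \<phi> where "\<phi> = (\<lambda>l. H (z + l *\<^sub>R (y - z)) - H z - l * (H y - H z - c) - c * l\<^sup>2)"
  have "((\<lambda>l. z + l *\<^sub>R (y - z)) has_derivative (\<lambda>l. l *\<^sub>R (y - z))) (at 0)"
    by (auto intro!: derivative_eq_intros)
  moreover have "(H has_derivative (\<lambda>u. u \<bullet> G)) (at (z + 0 *\<^sub>R (y - z)))"
    using grad by (simp add: H_def gderiv_def)
  ultimately have "((\<lambda>l. H (z + l *\<^sub>R (y - z))) has_derivative (\<lambda>l. (l *\<^sub>R (y - z)) \<bullet> G)) (at 0)"
    by (rule has_derivative_compose)
  then have "((\<lambda>l. H (z + l *\<^sub>R (y - z))) has_real_derivative ((y - z) \<bullet> G)) (at 0)"
    by (simp add: has_field_derivative_def mult_commute_abs)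
  then have \<phi>': "(\<phi> has_real_derivative ((y - z) \<bullet> G - (H y - H z - c))) (at 0)"
    unfolding \<phi>_def by (auto intro!: derivative_eq_intros)
  \<comment> \<open>\<open>\<phi> 0 = 0\<close> and \<open>\<phi> \<le> 0\<close> on \<open>(0, 1]\<close> by strong convexity, so \<open>\<phi>' 0 \<le> 0\<close>\<close>
  have \<phi>_le: "\<phi> l \<le> \<phi> 0" if "0 < l" "l \<le> 1" for l
  proof -
    have "z + l *\<^sub>R (y - z) = l *\<^sub>R y + (1 - l) *\<^sub>R z" by (simp add: algebra_simps)
    with strongly_convex_erealD(2)[OF sc proper hy hz, of l] that
    show ?thesis by (simp add: \<phi>_def H_def c_def power2_eq_square field_simps)
  qed
  have "(y - z) \<bullet> G - (H y - H z - c) \<le> 0"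
  proof (rule ccontr)
    assume "\<not> ?thesis"
    then obtain d where "d > 0" and "\<And>l. 0 < l \<Longrightarrow> l < d \<Longrightarrow> \<phi> 0 < \<phi> (0 + l)"
      using DERIV_pos_inc_right[OF \<phi>'] by force
    then have "\<phi> 0 < \<phi> (min (d / 2) 1)" by simp
    then show False using \<phi>_le[of "min (d / 2) 1"] \<open>d > 0\<close> by simp
  qed
  then show ?thesis by (simp add: H_def c_def inner_commute)
qed

lemma minimizes_tilted_quadratic_growth:
  fixes h :: "'a::real_inner \<Rightarrow> ereal"
  assumes sc: "strongly_convex_ereal \<mu> h" and proper: "\<forall>z. h z \<noteq> -\<infinity>"
    and hm: "h m < \<infinity>" and min: "minimizes_tilted h v m" and hz: "h z < \<infinity>"
  shows "real_of_ereal (h m) + m \<bullet> v + \<mu> / 2 * (norm (z - m))\<^sup>2 \<le> real_of_ereal (h z) + z \<bullet> v"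
proof -
  define \<Phi> where "\<Phi> = (\<lambda>u. real_of_ereal (h u) + u \<bullet> v)"
  have "\<Phi> m \<le> \<Phi> z - \<mu> / 2 * (1 - l) * (norm (z - m))\<^sup>2" if l: "0 < l" "l < 1" for l
  proof -
    define p where "p = l *\<^sub>R z + (1 - l) *\<^sub>R m"
    have hp: "h p < \<infinity>" using strongly_convex_erealD(1)[OF sc proper hz hm] l by (simp add: p_def)
    have "h m + ereal (m \<bullet> v) \<le> h p + ereal (p \<bullet> v)"
      using min by (simp add: minimizes_tilted_def)
    then have "\<Phi> m \<le> \<Phi> p"
      using hm hp proper by (cases "h m"; cases "h p") (simp_all add: \<Phi>_def)
    also have "\<Phi> p \<le> l * \<Phi> z + (1 - l) * \<Phi> m - \<mu> / 2 * l * (1 - l) * (norm (z - m))\<^sup>2"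
      using strongly_convex_erealD(2)[OF sc proper hz hm, of l] l
      by (simp add: \<Phi>_def p_def inner_add_left algebra_simps)
    finally have "l * \<Phi> m \<le> l * (\<Phi> z - \<mu> / 2 * (1 - l) * (norm (z - m))\<^sup>2)"
      by (simp add: algebra_simps)
    then show ?thesis using l by simp
  qed
  then have "eventually (\<lambda>l. \<Phi> m \<le> \<Phi> z - \<mu> / 2 * (1 - l) * (norm (z - m))\<^sup>2) (at_right 0)"
    using eventually_at_right_real[OF zero_less_one] by (auto elim: eventually_mono)
  moreover have "((\<lambda>l. \<Phi> z - \<mu> / 2 * (1 - l) * (norm (z - m))\<^sup>2) \<longlongrightarrow> \<Phi> z - \<mu> / 2 * (norm (z - m))\<^sup>2)
                   (at_right 0)"
    by (auto intro!: tendsto_eq_intros)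
  ultimately have "\<Phi> m \<le> \<Phi> z - \<mu> / 2 * (norm (z - m))\<^sup>2"
    by (intro tendsto_lowerbound) auto
  then show ?thesis by (simp add: \<Phi>_def)
qed

lemma tilted_bounded_below:
  fixes h :: "'a::real_inner \<Rightarrow> ereal"
  assumes sc: "strongly_convex_ereal \<mu> h" and proper: "\<forall>z. h z \<noteq> -\<infinity>"
    and ha: "h a < \<infinity>" and grad: "GDERIV (\<lambda>u. real_of_ereal (h u)) a :> G"
  shows "\<exists>L. \<forall>z. h z < \<infinity> \<longrightarrow> L \<le> real_of_ereal (h z) + z \<bullet> v"
proof (intro exI allI impI)
  fix z assume hz: "h z < \<infinity>"
  have "\<mu> > 0" using sc by (simp add: strongly_convex_ereal_def)
  have "real_of_ereal (h a) + G \<bullet> (z - a) + \<mu> / 2 * (norm (z - a))\<^sup>2 \<le> real_of_ereal (h z)"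
    by (rule strongly_convex_gradient_inequality[OF sc proper ha hz grad])
  moreover have "(- (G + v)) \<bullet> (z - a) - \<mu> / 2 * (norm (z - a))\<^sup>2 \<le> (norm (- (G + v)))\<^sup>2 / (2 * \<mu>)"
    by (rule inner_minus_quadratic_le[OF \<open>\<mu> > 0\<close>])
  moreover have "(- (G + v)) \<bullet> (z - a) = a \<bullet> v - z \<bullet> v - G \<bullet> (z - a)"
    by (simp add: inner_simps inner_commute)
  ultimately show "real_of_ereal (h a) + a \<bullet> v - (norm (G + v))\<^sup>2 / (2 * \<mu>) \<le> real_of_ereal (h z) + z \<bullet> v"
    unfolding norm_minus_cancel by linarith
qed

lemma tilted_midpoint_gap:
  fixes h :: "'a::real_inner \<Rightarrow> ereal"
  assumes sc: "strongly_convex_ereal \<mu> h" and proper: "\<forall>z. h z \<noteq> -\<infinity>"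
    and hx: "h x < \<infinity>" and hy: "h y < \<infinity>"
    and inf: "\<forall>z. h z < \<infinity> \<longrightarrow> m \<le> real_of_ereal (h z) + z \<bullet> v"
  shows "\<mu> / 8 * (norm (x - y))\<^sup>2
           \<le> (real_of_ereal (h x) + x \<bullet> v + (real_of_ereal (h y) + y \<bullet> v)) / 2 - m"
proof -
  define p where "p = (1 / 2) *\<^sub>R x + (1 - 1 / 2) *\<^sub>R y"
  have "h p < \<infinity>"
    using strongly_convex_erealD(1)[OF sc proper hx hy, of "1 / 2"] by (simp add: p_def)
  then have "m \<le> real_of_ereal (h p) + p \<bullet> v"
    using inf by blast
  moreover have "p \<bullet> v = (x \<bullet> v + y \<bullet> v) / 2"
    by (simp add: p_def inner_simps)
  moreover have "real_of_ereal (h p)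
      \<le> 1 / 2 * real_of_ereal (h x) + (1 - 1 / 2) * real_of_ereal (h y) - \<mu> / 2 * (1 / 2) * (1 - 1 / 2) * (norm (x - y))\<^sup>2"
    unfolding p_def by (rule strongly_convex_erealD(2)[OF sc proper hx hy]) simp_all
  ultimately show ?thesis by (simp add: field_simps)
qed

lemma fconj_gradient_at_minimizer:
  fixes h :: "'a::real_inner \<Rightarrow> ereal"
  assumes sc: "strongly_convex_ereal \<mu> h" and proper: "\<forall>z. h z \<noteq> -\<infinity>"
    and hm: "h m < \<infinity>" and min: "minimizes_tilted h v m"
  shows "GDERIV (\<lambda>u. real_of_ereal (fconj h u)) (- v) :> m"
proof -
  have "\<mu> > 0" using sc by (simp add: strongly_convex_ereal_def)
  define H where "H = (\<lambda>u. real_of_ereal (h u))"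
  define F where "F = (\<lambda>u. real_of_ereal (fconj h u))"
  have upper: "fconj h u \<le> ereal (u \<bullet> m - H m + (norm (u + v))\<^sup>2 / (2 * \<mu>))" for u
    unfolding fconj_def
  proof (rule SUP_least)
    fix z
    show "ereal (u \<bullet> z) - h z \<le> ereal (u \<bullet> m - H m + (norm (u + v))\<^sup>2 / (2 * \<mu>))"
    proof (cases "h z < \<infinity>")
      case True
      have "H m + m \<bullet> v + \<mu> / 2 * (norm (z - m))\<^sup>2 \<le> H z + z \<bullet> v"
        using minimizes_tilted_quadratic_growth[OF sc proper hm min True] by (simp add: H_def)
      moreover have "(u + v) \<bullet> (z - m) - \<mu> / 2 * (norm (z - m))\<^sup>2 \<le> (norm (u + v))\<^sup>2 / (2 * \<mu>)"
        by (rule inner_minus_quadratic_le[OF \<open>\<mu> > 0\<close>])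
      moreover have "(u + v) \<bullet> (z - m) = u \<bullet> z - u \<bullet> m + (z \<bullet> v - m \<bullet> v)"
        by (simp add: inner_simps inner_commute)
      ultimately have "u \<bullet> z - H z \<le> u \<bullet> m - H m + (norm (u + v))\<^sup>2 / (2 * \<mu>)"
        by linarith
      then show ?thesis
        using proper True by (cases "h z") (auto simp: H_def)
    qed simp
  qed
  have lower: "ereal (u \<bullet> m - H m) \<le> fconj h u" for u
    using proper hm unfolding fconj_def H_def by (cases "h m") (auto intro: SUP_upper2[of m])
  have band: "w \<bullet> m - H m \<le> F w \<and> F w \<le> w \<bullet> m - H m + (norm (w + v))\<^sup>2 / (2 * \<mu>)" for w
    using upper[of w] lower[of w] unfolding F_def by (cases "fconj h w") auto
  have "\<bar>F u - F (- v) - (u - - v) \<bullet> m\<bar> \<le> 1 / (2 * \<mu>) * (norm (u - - v))\<^sup>2" for u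
    using band[of u] band[of "- v"] by (simp add: abs_le_iff inner_add_left)
  then show ?thesis unfolding F_def by (rule gderiv_quadratic_sandwich)
qed

lemma minimizes_tilted_finite:
  assumes "minimizes_tilted h v x" "edom h \<noteq> {}" "\<forall>z. h z \<noteq> -\<infinity>"
  shows "h x < \<infinity>"
proof -
  obtain a where "h a < \<infinity>" using assms(2) by (auto simp: edom_def)
  moreover have "h x + ereal (x \<bullet> v) \<le> h a + ereal (a \<bullet> v)"
    using assms(1) by (simp add: minimizes_tilted_def)
  ultimately show ?thesis using assms(3) by (cases "h x"; cases "h a") auto
qed

lemma minimizes_tilted_gradient_bound:
  fixes h :: "'a::real_inner \<Rightarrow> ereal"
  assumes sc: "strongly_convex_ereal \<mu> h" and proper: "\<forall>z. h z \<noteq> -\<infinity>"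
    and hx: "h x < \<infinity>" and min: "minimizes_tilted h v x"
    and s: "0 < s" "s \<le> 1" and hz: "h (x + s *\<^sub>R (a - x)) < \<infinity>"
    and grad: "GDERIV (\<lambda>u. real_of_ereal (h u)) (x + s *\<^sub>R (a - x)) :> G"
    and r: "0 \<le> r" and bound: "\<forall>u\<in>cball a r. h u \<le> ereal B"
  shows "r * norm G \<le> B - real_of_ereal (h x) + (a - x) \<bullet> v"
proof -
  define H where "H = (\<lambda>u. real_of_ereal (h u))"
  define z where "z = x + s *\<^sub>R (a - x)"
  \<comment> \<open>testing the gradient inequality at \<open>a'\<close>, where \<open>h \<le> B\<close>, produces the term \<open>r * norm G\<close>\<close>
  define a' where "a' = a + r *\<^sub>R sgn G"
  note hz' = hz[folded z_def] and grad' = grad[folded z_def]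
  have "\<mu> > 0" using sc by (simp add: strongly_convex_ereal_def)
  have "a' \<in> cball a r" using r by (simp add: a'_def dist_norm norm_sgn)
  with bound have ha': "h a' \<le> ereal B" by blast
  then have "h a' < \<infinity>" by (cases "h a'") auto
  with ha' proper have Ha': "H a' \<le> B" by (cases "h a'") (simp_all add: H_def)
  have "h x + ereal (x \<bullet> v) \<le> h z + ereal (z \<bullet> v)"
    using min by (simp add: minimizes_tilted_def)
  then have tilt: "H x + x \<bullet> v \<le> H z + z \<bullet> v"
    using hx hz' proper by (cases "h x"; cases "h z") (simp_all add: H_def)
  have "0 \<le> \<mu> / 2 * (norm (x - z))\<^sup>2" "0 \<le> \<mu> / 2 * (norm (a' - z))\<^sup>2"
    using \<open>\<mu> > 0\<close> by simp_all
  then have grad_x: "H z + G \<bullet> (x - z) \<le> H x" and grad_a': "H z + G \<bullet> (a' - z) \<le> H a'"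
    using strongly_convex_gradient_inequality[OF sc proper hz' _ grad'] hx \<open>h a' < \<infinity>\<close>
    unfolding H_def by fastforce+
  have xz: "x - z = - (s *\<^sub>R (a - x))" and zv: "z \<bullet> v = x \<bullet> v + s * ((a - x) \<bullet> v)"
    by (simp_all add: z_def inner_simps)
  \<comment> \<open>testing it at the minimizer \<open>x\<close> bounds the slope of \<open>G\<close> along \<open>a - x\<close>\<close>
  have "s * (- (G \<bullet> (a - x)) - (a - x) \<bullet> v) \<le> 0"
    using grad_x tilt xz zv by (simp add: right_diff_distrib)
  then have Gax: "- (G \<bullet> (a - x)) \<le> (a - x) \<bullet> v"
    using s by (simp add: mult_le_0_iff)
  have "G \<bullet> sgn G = norm G"
    by (simp add: sgn_div_norm divide_inverse power2_norm_eq_inner[symmetric] power2_eq_square)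
       (metis left_inverse norm_eq_zero)
  then have "G \<bullet> (a' - z) = (1 - s) * (G \<bullet> (a - x)) + r * norm G"
    by (simp add: a'_def z_def inner_diff_right inner_add_right algebra_simps)
  moreover have "- ((1 - s) * (G \<bullet> (a - x))) \<le> (1 - s) * ((a - x) \<bullet> v)"
    using mult_left_mono[OF Gax, of "1 - s"] s by simp
  moreover have "(1 - s) * ((a - x) \<bullet> v) = (a - x) \<bullet> v - s * ((a - x) \<bullet> v)"
    by (simp add: algebra_simps)
  ultimately have "r * norm G \<le> B - H x + (a - x) \<bullet> v"
    using grad_a' Ha' tilt zv by linarith
  then show ?thesis by (simp add: H_def)
qed

lemma mem_interior_convex_segment:
  fixes S :: "'a::euclidean_space set"
  assumes "convex S" "a \<in> interior S" "x \<in> S" "0 < s" "s \<le> 1"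
  shows "x + s *\<^sub>R (a - x) \<in> interior S"
  using mem_interior_convex_shrink[OF assms] by (simp add: algebra_simps)

lemma filterlim_segment_at_within_interior:
  fixes S :: "'a::euclidean_space set"
  assumes "convex S" "a \<in> interior S" "x \<in> S" "x \<notin> interior S"
  shows "filterlim (\<lambda>s. x + s *\<^sub>R (a - x)) (at x within interior S) (at_right 0)"
proof (rule filterlim_at_withinI)
  show "((\<lambda>s. x + s *\<^sub>R (a - x)) \<longlongrightarrow> x) (at_right 0)"
    by (auto intro!: tendsto_eq_intros)
  show "eventually (\<lambda>s. x + s *\<^sub>R (a - x) \<in> interior S - {x}) (at_right 0)"
    using eventually_at_right_real[OF zero_less_one]
    by eventually_elim (use assms in \<open>auto intro: mem_interior_convex_segment\<close>)
qed

lemma gderiv_bounded_above_near: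
  fixes h :: "'a::real_inner \<Rightarrow> ereal"
  assumes proper: "\<forall>z. h z \<noteq> -\<infinity>" and a: "a \<in> interior (edom h)"
    and grad: "GDERIV (\<lambda>u. real_of_ereal (h u)) a :> G"
  obtains r where "r > 0" "\<forall>u\<in>cball a r. h u \<le> ereal (real_of_ereal (h a) + 1)"
proof -
  define H where "H = (\<lambda>u. real_of_ereal (h u))"
  have "isCont H a" using grad unfolding gderiv_def H_def by (rule has_derivative_continuous)
  then obtain r0 where "r0 > 0" and r0: "\<And>u. dist u a < r0 \<Longrightarrow> dist (H u) (H a) < 1"
    unfolding continuous_at_eps_delta by (meson zero_less_one)
  obtain r1 where "r1 > 0" and r1: "cball a r1 \<subseteq> interior (edom h)"
    using a open_contains_cball[of "interior (edom h)"] by auto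
  have "h u \<le> ereal (H a + 1)" if "u \<in> cball a (min (r0 / 2) r1)" for u
  proof -
    have "u \<in> interior (edom h)" "dist u a < r0"
      using that r1 \<open>r0 > 0\<close> by (auto simp: dist_commute)
    then have "u \<in> edom h" "dist u a < r0" using interior_subset by blast+
    then show ?thesis using r0[of u] proper by (cases "h u") (auto simp: H_def dist_real_def edom_def)
  qed
  then show thesis using that[of "min (r0 / 2) r1"] \<open>r0 > 0\<close> \<open>r1 > 0\<close> by (auto simp: H_def)
qed

lemma minimizes_tilted_in_interior:
  fixes h :: "'a::euclidean_space \<Rightarrow> ereal"
  assumes sc: "strongly_convex_ereal \<mu> h" and proper: "\<forall>z. h z \<noteq> -\<infinity>"
    and smooth: "essentially_smooth h dh" and min: "minimizes_tilted h v x"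
  shows "x \<in> interior (edom h)"
proof (rule ccontr)
  define I where "I = interior (edom h)"
  define H where "H = (\<lambda>u. real_of_ereal (h u))"
  assume "x \<notin> interior (edom h)"
  have "I \<noteq> {}" and grad: "\<And>u. u \<in> I \<Longrightarrow> GDERIV H u :> dh u"
    and blowup: "\<And>b. b \<in> frontier (edom h) \<Longrightarrow> filterlim (\<lambda>u. norm (dh u)) at_top (at b within I)"
    using smooth unfolding essentially_smooth_def I_def H_def by auto
  then obtain a where "a \<in> I" by blast
  then obtain r where "r > 0" and bound: "\<forall>u\<in>cball a r. h u \<le> ereal (H a + 1)"
    using gderiv_bounded_above_near[OF proper] grad unfolding I_def H_def by blast
  have "edom h \<noteq> {}" using \<open>a \<in> I\<close> interior_subset by (auto simp: I_def)
  then have hx: "h x < \<infinity>" by (rule minimizes_tilted_finite[OF min _ proper])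
  then have "x \<in> edom h" by (simp add: edom_def)
  note segment = mem_interior_convex_segment[OF convex_edom[OF sc proper] \<open>a \<in> I\<close>[unfolded I_def] this]
  have "x \<in> frontier (edom h)"
    using \<open>x \<in> edom h\<close> \<open>x \<notin> interior (edom h)\<close> closure_subset by (auto simp: frontier_def)
  from filterlim_compose[OF blowup[OF this] filterlim_segment_at_within_interior[OF convex_edom[OF sc proper]
         \<open>a \<in> I\<close>[unfolded I_def] \<open>x \<in> edom h\<close> \<open>x \<notin> interior (edom h)\<close>, folded I_def]]
  have "eventually (\<lambda>s. (H a + 1 - H x + (a - x) \<bullet> v) / r + 1 \<le> norm (dh (x + s *\<^sub>R (a - x)))) (at_right 0)"
    unfolding filterlim_at_top by blast
  \<comment> \<open>but along the segment the gradient stays bounded\<close>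
  moreover have "eventually (\<lambda>s. norm (dh (x + s *\<^sub>R (a - x))) \<le> (H a + 1 - H x + (a - x) \<bullet> v) / r) (at_right 0)"
    using eventually_at_right_real[OF zero_less_one]
  proof eventually_elim
    case (elim s)
    then have s: "0 < s" "s \<le> 1" and "x + s *\<^sub>R (a - x) \<in> I" by (auto simp: I_def intro: segment)
    then have "h (x + s *\<^sub>R (a - x)) < \<infinity>"
      and "GDERIV (\<lambda>u. real_of_ereal (h u)) (x + s *\<^sub>R (a - x)) :> dh (x + s *\<^sub>R (a - x))"
      using grad interior_subset unfolding H_def I_def edom_def by blast+
    from minimizes_tilted_gradient_bound[OF sc proper hx min s this _ bound] \<open>r > 0\<close>
    show ?case by (simp add: H_def pos_le_divide_eq mult.commute)
  qed
  ultimately have "eventually (\<lambda>s. False) (at_right (0::real))"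
    by eventually_elim linarith
  then show False by (simp add: trivial_limit_at_right_real)
qed

lemma minimizes_tilted_gradient:
  fixes h :: "'a::real_inner \<Rightarrow> ereal"
  assumes proper: "\<forall>z. h z \<noteq> -\<infinity>" and x: "x \<in> interior (edom h)"
    and grad: "GDERIV (\<lambda>u. real_of_ereal (h u)) x :> G" and min: "minimizes_tilted h v x"
  shows "G = - v"
proof -
  define H where "H = (\<lambda>u. real_of_ereal (h u))"
  have finite: "h u < \<infinity>" if "u \<in> interior (edom h)" for u
    using that interior_subset unfolding edom_def by blast
  have "((\<lambda>u. H u + u \<bullet> v) has_derivative (\<lambda>d. d \<bullet> G + d \<bullet> v)) (at x)"
    using grad unfolding gderiv_def H_def by (auto intro!: derivative_eq_intros)
  moreover have "eventually (\<lambda>u. H x + x \<bullet> v \<le> H u + u \<bullet> v) (at x)"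
    using eventually_at_in_open'[OF open_interior x]
  proof eventually_elim
    case (elim u)
    have "h x + ereal (x \<bullet> v) \<le> h u + ereal (u \<bullet> v)" using min by (simp add: minimizes_tilted_def)
    then show ?case using finite[OF x] finite[OF elim] proper by (cases "h x"; cases "h u") (simp_all add: H_def)
  qed
  ultimately have "(\<lambda>d. d \<bullet> G + d \<bullet> v) = (\<lambda>d. 0)" by (rule has_derivative_local_min)
  then have "(G + v) \<bullet> G + (G + v) \<bullet> v = 0" by metis
  then have "(G + v) \<bullet> (G + v) = 0" by (simp add: inner_add_right)
  then show ?thesis by (simp add: eq_neg_iff_add_eq_0)
qed

lemma minimizes_tilted_imp_gradient:
  fixes h :: "'a::euclidean_space \<Rightarrow> ereal"
  assumes sc: "strongly_convex_ereal \<mu> h" and proper: "\<forall>z. h z \<noteq> -\<infinity>"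
    and smooth: "essentially_smooth h dh" and min: "minimizes_tilted h v x"
  shows "x \<in> interior (edom h) \<and> dh x = - v"
proof
  show x: "x \<in> interior (edom h)" by (rule minimizes_tilted_in_interior[OF sc proper smooth min])
  with smooth have "GDERIV (\<lambda>u. real_of_ereal (h u)) x :> dh x"
    unfolding essentially_smooth_def by blast
  then show "dh x = - v" by (rule minimizes_tilted_gradient[OF proper x _ min])
qed

lemma minimizes_tilted_limit_of_minimizing:
  fixes h :: "'a::real_inner \<Rightarrow> ereal"
  assumes "lsc h" and proper: "\<forall>z. h z \<noteq> -\<infinity>" and zs: "\<And>n. h (zs n) < \<infinity>" and x: "zs \<longlonglongrightarrow> x"
    and lim: "(\<lambda>n. real_of_ereal (h (zs n)) + zs n \<bullet> v) \<longlonglongrightarrow> m"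
    and inf: "\<forall>z. h z < \<infinity> \<longrightarrow> m \<le> real_of_ereal (h z) + z \<bullet> v"
  shows "minimizes_tilted h v x"
proof -
  have "(\<lambda>n. real_of_ereal (h (zs n))) \<longlonglongrightarrow> m - x \<bullet> v"
    using tendsto_diff[OF lim tendsto_inner[OF x tendsto_const[of v]]] by simp
  then have "(\<lambda>n. ereal (real_of_ereal (h (zs n)))) \<longlonglongrightarrow> ereal (m - x \<bullet> v)"
    by (rule tendsto_ereal)
  moreover have "ereal (real_of_ereal (h (zs n))) = h (zs n)" for n
    using zs[of n] proper by (cases "h (zs n)") simp_all
  ultimately have "(\<lambda>n. h (zs n)) \<longlonglongrightarrow> ereal (m - x \<bullet> v)"
    by simp
  then have hx: "h x \<le> ereal (m - x \<bullet> v)"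
    by (rule lsc_le_tendsto[OF \<open>lsc h\<close> x]) simp
  have "h x + ereal (x \<bullet> v) \<le> h z + ereal (z \<bullet> v)" for z
  proof (cases "h z < \<infinity>")
    case True
    with inf have "m \<le> real_of_ereal (h z) + z \<bullet> v" by blast
    with hx proper True show ?thesis by (cases "h x"; cases "h z") auto
  qed (use proper in \<open>cases "h x"; simp\<close>)
  then show ?thesis unfolding minimizes_tilted_def by blast
qed

lemma minimizes_tilted_exists:
  fixes h :: "'a::euclidean_space \<Rightarrow> ereal"
  assumes sc: "strongly_convex_ereal \<mu> h" and proper: "\<forall>z. h z \<noteq> -\<infinity>"
    and smooth: "essentially_smooth h dh" and "lsc h"
  shows "\<exists>x. minimizes_tilted h v x"
proof -
  define \<Phi> where "\<Phi> = (\<lambda>z. real_of_ereal (h z) + z \<bullet> v)"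
  have "\<mu> > 0" using sc by (simp add: strongly_convex_ereal_def)
  obtain a where a: "a \<in> interior (edom h)" and "GDERIV (\<lambda>u. real_of_ereal (h u)) a :> dh a"
    using smooth unfolding essentially_smooth_def by blast
  moreover have ha: "h a < \<infinity>" using a interior_subset by (auto simp: edom_def)
  ultimately obtain L where "\<forall>z. h z < \<infinity> \<longrightarrow> L \<le> \<Phi> z"
    using tilted_bounded_below[OF sc proper] unfolding \<Phi>_def by blast
  then have "bdd_below (\<Phi> ` edom h)" by (auto simp: edom_def intro: bdd_belowI2)
  moreover have "\<Phi> ` edom h \<noteq> {}" using ha by (auto simp: edom_def)
  ultimately have inf: "\<forall>z. h z < \<infinity> \<longrightarrow> Inf (\<Phi> ` edom h) \<le> \<Phi> z"
    and "Inf (\<Phi> ` edom h) \<in> closure (\<Phi> ` edom h)"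
    by (auto simp: edom_def intro: cInf_lower closure_contains_Inf)
  then obtain \<psi> where \<psi>: "\<forall>n. \<psi> n \<in> \<Phi> ` edom h" and lim: "\<psi> \<longlonglongrightarrow> Inf (\<Phi> ` edom h)"
    using closure_sequential by blast
  obtain zs where zs: "\<And>n. h (zs n) < \<infinity>" and "\<And>n. \<psi> n = \<Phi> (zs n)"
    using \<psi> by (auto simp: edom_def image_iff) metis
  then have "(\<lambda>n. \<Phi> (zs n)) = \<psi>" by auto
  with lim have lim: "(\<lambda>n. \<Phi> (zs n)) \<longlonglongrightarrow> Inf (\<Phi> ` edom h)" by simp
  \<comment> \<open>strong convexity turns a minimizing sequence into a Cauchy sequence\<close>
  have "Cauchy zs"
  proof (rule Cauchy_of_midpoint_gap[OF _ lim])
    show "\<mu> / 8 > 0" using \<open>\<mu> > 0\<close> by simp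
    show "\<mu> / 8 * (norm (zs i - zs j))\<^sup>2 \<le> (\<Phi> (zs i) + \<Phi> (zs j)) / 2 - Inf (\<Phi> ` edom h)" for i j
      unfolding \<Phi>_def by (rule tilted_midpoint_gap[OF sc proper zs zs inf[unfolded \<Phi>_def]])
  qed
  then obtain x where "zs \<longlonglongrightarrow> x" using Cauchy_convergent_iff convergent_def by blast
  then have "minimizes_tilted h v x"
    using minimizes_tilted_limit_of_minimizing[where zs = zs, OF \<open>lsc h\<close> proper zs] lim inf
    unfolding \<Phi>_def by blast
  then show ?thesis ..
qed

lemma gradient_fconj_iff_minimizes_tilted:
  fixes h :: "'a::euclidean_space \<Rightarrow> ereal"
  assumes sc: "strongly_convex_ereal \<mu> h" and proper: "\<forall>z. h z \<noteq> -\<infinity>"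
    and smooth: "essentially_smooth h dh" and "lsc h"
  shows "GDERIV (\<lambda>u. real_of_ereal (fconj h u)) (- v) :> x \<longleftrightarrow> minimizes_tilted h v x"
proof
  have "edom h \<noteq> {}" using smooth interior_subset unfolding essentially_smooth_def by blast
  note gradient = fconj_gradient_at_minimizer[OF sc proper minimizes_tilted_finite[OF _ this proper]]
  {
    assume "GDERIV (\<lambda>u. real_of_ereal (fconj h u)) (- v) :> x"
    moreover obtain m where "minimizes_tilted h v m"
      using minimizes_tilted_exists[OF sc proper smooth \<open>lsc h\<close>] by blast
    ultimately show "minimizes_tilted h v x" using gradient gderiv_unique by metis
  }
  show "minimizes_tilted h v x \<Longrightarrow> GDERIV (\<lambda>u. real_of_ereal (fconj h u)) (- v) :> x"
    using gradient by blast
qed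

lemma ereal_mirror_objective:
  fixes a :: ereal
  assumes "a \<noteq> -\<infinity>"
  shows "a - ereal ((1 - r) * (z \<bullet> g)) + ereal (r * (z \<bullet> b)) = a + ereal (z \<bullet> (r *\<^sub>R b - (1 - r) *\<^sub>R g))"
  using assms by (cases a) (simp_all add: inner_diff_right)

theorem proposition2:
  fixes A :: "real^'p^'n"
    and f :: "real^'n \<Rightarrow> real"
    and h :: "real^'p \<Rightarrow> ereal"
    and dh :: "real^'p \<Rightarrow> real^'p"
    and \<mu> :: real
    and \<rho> :: "nat \<Rightarrow> real"
    and x :: "nat \<Rightarrow> real^'p"
    and y ybar :: "nat \<Rightarrow> real^'n"
  defines "C \<equiv> edom (fconj (\<lambda>z. ereal (f z)))"
  assumes f_convex: "convex_on UNIV f"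
    and f_lipschitz: "\<exists>L. L-lipschitz_on UNIV f"
    and h_proper: "\<forall>z. h z \<noteq> -\<infinity>"
    and h_lsc: "lsc h"
    and h_strong: "strongly_convex_ereal \<mu> h"
    and h_smooth: "essentially_smooth h dh"
    and rho: "\<forall>t\<ge>1. \<rho> t \<in> {0..1}"
    and y0: "y 0 \<in> C"
    and ybar_max: "\<forall>t. ybar t \<in> C \<and>
         (\<forall>v\<in>C. ereal (v \<bullet> (A *v x t)) - fconj (\<lambda>z. ereal (f z)) v
                \<le> ereal (ybar t \<bullet> (A *v x t)) - fconj (\<lambda>z. ereal (f z)) (ybar t))"
    and y_step: "\<forall>t. y (Suc t) = (1 - \<rho> (Suc t)) *\<^sub>R y t + \<rho> (Suc t) *\<^sub>R ybar t"
  shows "((\<forall>t. \<forall>z. h (x t) + ereal (x t \<bullet> (transpose A *v y t))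
                   \<le> h z + ereal (z \<bullet> (transpose A *v y t)))
          \<longleftrightarrow>
          (GDERIV (\<lambda>z. real_of_ereal (fconj h z)) (- (transpose A *v y 0)) :> x 0 \<and>
           (\<forall>t. \<forall>z. h (x (Suc t)) - ereal ((1 - \<rho> (Suc t)) * (x (Suc t) \<bullet> dh (x t)))
                      + ereal (\<rho> (Suc t) * (x (Suc t) \<bullet> (transpose A *v ybar t)))
                   \<le> h z - ereal ((1 - \<rho> (Suc t)) * (z \<bullet> dh (x t)))
                      + ereal (\<rho> (Suc t) * (z \<bullet> (transpose A *v ybar t))))))
         \<and> ((\<forall>t. \<forall>z. h (x t) + ereal (x t \<bullet> (transpose A *v y t))
                   \<le> h z + ereal (z \<bullet> (transpose A *v y t)))
            \<longrightarrow> (\<forall>t. x t \<in> interior (edom h) \<and> dh (x t) = - (transpose A *v y t)))"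
proof -
  define w where "w t = transpose A *v y t" for t
  define P where "P t \<longleftrightarrow> minimizes_tilted h (w t) (x t)" for t
  have gradient: "x t \<in> interior (edom h) \<and> dh (x t) = - w t" if "P t" for t
    using minimizes_tilted_imp_gradient[OF h_strong h_proper h_smooth] that unfolding P_def by blast
  have objective: "h z - ereal ((1 - \<rho> (Suc t)) * (z \<bullet> dh (x t))) + ereal (\<rho> (Suc t) * (z \<bullet> (transpose A *v ybar t)))
      = h z + ereal (z \<bullet> (\<rho> (Suc t) *\<^sub>R (transpose A *v ybar t) - (1 - \<rho> (Suc t)) *\<^sub>R dh (x t)))" for z t
    using h_proper by (intro ereal_mirror_objective) blast
  \<comment> \<open>once \<open>h' (x t) = - w t\<close>, the mirror step minimizes \<open>h\<close> tilted by the averaged dual iterate\<close>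
  have "\<rho> (Suc t) *\<^sub>R (transpose A *v ybar t) - (1 - \<rho> (Suc t)) *\<^sub>R dh (x t) = w (Suc t)" if "P t" for t
    using gradient[OF that] y_step
    by (simp add: w_def matrix_vector_right_distrib matrix_vector_mult_scaleR)
  then have "(\<forall>t. P t) \<longleftrightarrow> P 0 \<and> (\<forall>t. minimizes_tilted h (\<rho> (Suc t) *\<^sub>R (transpose A *v ybar t)
                                     - (1 - \<rho> (Suc t)) *\<^sub>R dh (x t)) (x (Suc t)))"
    by (intro all_nat_iff_base_and_step) (simp add: P_def)
  moreover have "P 0 \<longleftrightarrow> GDERIV (\<lambda>z. real_of_ereal (fconj h z)) (- w 0) :> x 0"
    unfolding P_def by (rule gradient_fconj_iff_minimizes_tilted[OF h_strong h_proper h_smooth h_lsc, symmetric])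
  ultimately show ?thesis
    using gradient unfolding objective P_def minimizes_tilted_def w_def by blast
qed

end
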